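(* Let $(\mathcal V,\otimes,\lambda)$ be a colax Monoidal category and let $(C,\chi)$ be a homotopy coalgebra in $\mathcal V$. Then $(C,\chi)$ is the homotopy coalgebra associated with an ordinary (coassociative counital) coalgebra if and only if $C(I)=C(1)^{\otimes I}$ for all $I\in\mathbb N$ and $\chi^I_{n_1,\dots,n_I}=\lambda^{\sqcup_{i\in I}\mathbf n_i\to I}$ for all $I,n_1,\dots,n_I\in\mathbb N$, where $\sqcup_{i\in I}\mathbf n_i\to I$ is the non-decreasing map sending the $i$-th block $\mathbf n_i$ to $i$.
   Context: $\mathcal O_{sk}$ is the category with objects $\mathbf n=\{1<\dots<n\}$, $n\ge0$ (identified with $n\in\mathbb N$) and non-decreasing maps as morphisms; $\sqcup$ is ordered disjoint union. Composition is written in diagrammatic order. A colax Monoidal category $(\mathcal V,\otimes,\lambda)$ has tensor products $\otimes^{i\in I}X_i$ of finite ordered families and coherent structure morphisms $\lambda^\phi:\otimes^{j\in J}\otimes^{i\in\phi^{-1}j}X_i\to\otimes^{i\in I}X_i$ for $\phi:I\to J$ in $\mathcal O_{sk}$ (the opposite of a lax Monoidal structure on $\mathcal V^{op}$). A homotopy coalgebra $(C,\chi)$ is a lax Monoidal functor $(\mathcal O_{sk}^{op},\sqcup,\mathrm{id})\to(\mathcal V,\otimes,\lambda)$: objects $C(k)$, a functor $C:\mathcal O_{sk}^{op}\to\mathcal V$ (write $C(\phi^{op})$ for $\phi:I\to J$), morphisms $\chi^I_{N_1,\dots,N_I}:\otimes^{i\in I}C(N_i)\to C(\sqcup_iN_i)$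 natural in the $N_i$, with $\chi^{\mathbf1}_N=\mathrm{id}$ and, for every $\phi:I\to J$ and family $(N_i)_{i\in I}$, $(\otimes^{j\in J}\chi^{\phi^{-1}j})\chi^J=\lambda^\phi\chi^I$. An ordinary coalgebra is an object $C$ with $\Delta_I:C\to C^{\otimes I}$, $I\in\mathbb N$, $\Delta_{\mathbf1}=\mathrm{id}$, $\Delta_I=\Delta_J(\otimes^{j\in J}\Delta_{\phi^{-1}j})\lambda^\phi$ for all $\phi:I\to J$. Its associated homotopy coalgebra has $C(J)=C^{\otimes J}$, $C(\phi^{op})=(\otimes^{j\in J}\Delta_{\phi^{-1}j})\lambda^\phi$ and $\chi^I_{n_1,\dots,n_I}=\lambda^{\psi}$ where $\psi:\sqcup_{i\in I}\mathbf n_i\to I$ sends the $i$-th block to $i$. *)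

theory Defs
  imports Main
begin

text \<open>A morphism phi : I -> J of O_sk (I = {1<..<I}, J = {1<..<J}) is encoded as the list
  [phi 1, ..., phi I] of its values: a sorted list of length I with entries in {1..J}.\<close>

definition osk_map :: "nat list \<Rightarrow> nat \<Rightarrow> bool" where
  "osk_map phi J \<longleftrightarrow> sorted phi \<and> (\<forall>v\<in>set phi. 1 \<le> v \<and> v \<le> J)"

definition osk_id :: "nat \<Rightarrow> nat list" where
  "osk_id I = [1..<Suc I]"

text \<open>Diagrammatic composition phi ; psi (first phi, then psi).\<close>
definition osk_comp :: "nat list \<Rightarrow> nat list \<Rightarrow> nat list" where
  "osk_comp phi psi = map (\<lambda>v. psi ! (v - 1)) phi"

text \<open>The subfamily of a family xs indexed by the fibre phi^{-1} j (in increasing order).\<close>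
definition fib :: "nat list \<Rightarrow> 'a list \<Rightarrow> nat \<Rightarrow> 'a list" where
  "fib phi xs j = map snd (filter (\<lambda>p. fst p = j) (zip phi xs))"

text \<open>Restriction of phi : I -> J to (phi;psi)^{-1} k -> psi^{-1} k (both renumbered from 1).\<close>
definition osk_restr :: "nat list \<Rightarrow> nat list \<Rightarrow> nat \<Rightarrow> nat list" where
  "osk_restr phi psi k =
     map (\<lambda>v. v - length (filter (\<lambda>w. w < k) psi)) (filter (\<lambda>v. psi ! (v - 1) = k) phi)"

text \<open>Ordered disjoint union of maps phi_i : N_i -> M_i, giving sum N_i -> sum M_i.\<close>
definition osk_dunion :: "nat list \<Rightarrow> nat list list \<Rightarrow> nat list" where
  "osk_dunion Ms phis =
     concat (map (\<lambda>i. map (\<lambda>v. v + sum_list (take i Ms)) (phis ! i)) [0..<length phis])"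

definition block_map :: "nat list \<Rightarrow> nat list" where
  "block_map ns = concat (map2 (\<lambda>i n. replicate n i) [1..<Suc (length ns)] ns)"

text \<open>A category with objects all elements of 'o, arrows the elements of 'm satisfying c_arr,
  composition c_cmp written in diagrammatic order; tensor products of finite ordered families
  (lists) of objects and arrows; and lam J phi Xs = lambda^phi for phi : I -> J at the family Xs,
  a morphism  tens_j tens_{i in phi^{-1} j} X_i -> tens_i X_i.\<close>

record ('o, 'm) colax_cat =
  c_arr :: "'m \<Rightarrow> bool"
  c_dom :: "'m \<Rightarrow> 'o"
  c_cod :: "'m \<Rightarrow> 'o"
  c_cmp :: "'m \<Rightarrow> 'm \<Rightarrow> 'm"
  c_idt :: "'o \<Rightarrow> 'm"
  c_tens :: "'o list \<Rightarrow> 'o"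
  c_tensm :: "'m list \<Rightarrow> 'm"
  c_lam :: "nat \<Rightarrow> nat list \<Rightarrow> 'o list \<Rightarrow> 'm"

definition lam_src :: "('o, 'm) colax_cat \<Rightarrow> nat \<Rightarrow> nat list \<Rightarrow> 'o list \<Rightarrow> 'o" where
  "lam_src V J phi Xs = c_tens V (map (\<lambda>j. c_tens V (fib phi Xs j)) [1..<Suc J])"

definition category :: "('o, 'm) colax_cat \<Rightarrow> bool" where
  "category V \<longleftrightarrow>
    (\<forall>a. c_arr V (c_idt V a) \<and> c_dom V (c_idt V a) = a \<and> c_cod V (c_idt V a) = a) \<and>
    (\<forall>f g. c_arr V f \<and> c_arr V g \<and> c_cod V f = c_dom V g \<longrightarrow>
        c_arr V (c_cmp V f g) \<and> c_dom V (c_cmp V f g) = c_dom V f \<and>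
        c_cod V (c_cmp V f g) = c_cod V g) \<and>
    (\<forall>f. c_arr V f \<longrightarrow> c_cmp V (c_idt V (c_dom V f)) f = f \<and> c_cmp V f (c_idt V (c_cod V f)) = f) \<and>
    (\<forall>f g h. c_arr V f \<and> c_arr V g \<and> c_arr V h \<and> c_cod V f = c_dom V g \<and> c_cod V g = c_dom V h
        \<longrightarrow> c_cmp V (c_cmp V f g) h = c_cmp V f (c_cmp V g h))"

definition tensor_functors :: "('o, 'm) colax_cat \<Rightarrow> bool" where
  "tensor_functors V \<longleftrightarrow>
    (\<forall>fs. list_all (c_arr V) fs \<longrightarrow>
        c_arr V (c_tensm V fs) \<and> c_dom V (c_tensm V fs) = c_tens V (map (c_dom V) fs) \<and>
        c_cod V (c_tensm V fs) = c_tens V (map (c_cod V) fs)) \<and>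
    (\<forall>xs. c_tensm V (map (c_idt V) xs) = c_idt V (c_tens V xs)) \<and>
    (\<forall>fs gs. length fs = length gs \<and>
        (\<forall>i<length fs. c_arr V (fs ! i) \<and> c_arr V (gs ! i) \<and> c_cod V (fs ! i) = c_dom V (gs ! i))
        \<longrightarrow> c_tensm V (map2 (c_cmp V) fs gs) = c_cmp V (c_tensm V fs) (c_tensm V gs)) \<and>
    (\<forall>x. c_tens V [x] = x) \<and> (\<forall>f. c_tensm V [f] = f)"

definition colax_monoidal :: "('o, 'm) colax_cat \<Rightarrow> bool" where
  "colax_monoidal V \<longleftrightarrow> category V \<and> tensor_functors V \<and>
    \<comment> \<open>typing of lambda\<close>
    (\<forall>J phi Xs. osk_map phi J \<and> length Xs = length phi \<longrightarrow>
        c_arr V (c_lam V J phi Xs) \<and> c_dom V (c_lam V J phi Xs) = lam_src V J phi Xs \<and>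
        c_cod V (c_lam V J phi Xs) = c_tens V Xs) \<and>
    \<comment> \<open>naturality of lambda\<close>
    (\<forall>J phi fs. osk_map phi J \<and> length fs = length phi \<and> list_all (c_arr V) fs \<longrightarrow>
        c_cmp V (c_tensm V (map (\<lambda>j. c_tensm V (fib phi fs j)) [1..<Suc J]))
                (c_lam V J phi (map (c_cod V) fs))
        = c_cmp V (c_lam V J phi (map (c_dom V) fs)) (c_tensm V fs)) \<and>
    \<comment> \<open>lambda^{id} = id and lambda^{I -> 1} = id\<close>
    (\<forall>Xs. c_lam V (length Xs) (osk_id (length Xs)) Xs = c_idt V (c_tens V Xs)) \<and>
    (\<forall>Xs. c_lam V 1 (replicate (length Xs) 1) Xs = c_idt V (c_tens V Xs)) \<and>
    \<comment> \<open>coherence for I --phi--> J --psi--> K\<close>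
    (\<forall>phi psi J K Xs. osk_map phi J \<and> osk_map psi K \<and> length psi = J \<and> length Xs = length phi \<longrightarrow>
        c_cmp V (c_lam V K psi (map (\<lambda>j. c_tens V (fib phi Xs j)) [1..<Suc J])) (c_lam V J phi Xs)
        = c_cmp V (c_tensm V (map (\<lambda>k. c_lam V (count_list psi k) (osk_restr phi psi k)
                                          (fib (osk_comp phi psi) Xs k)) [1..<Suc K]))
                  (c_lam V K (osk_comp phi psi) Xs))"

text \<open>hC I = C(I); hCm phi J = C(phi^op) : C(J) -> C(I) for phi : I -> J;
  hchi ns = chi^I_{n_1,...,n_I} : tens_i C(n_i) -> C(sum n_i), where I = length ns.\<close>

record ('o, 'm) hcoalg =
  hC :: "nat \<Rightarrow> 'o"
  hCm :: "nat list \<Rightarrow> nat \<Rightarrow> 'm"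
  hchi :: "nat list \<Rightarrow> 'm"

definition homotopy_coalgebra :: "('o, 'm) colax_cat \<Rightarrow> ('o, 'm) hcoalg \<Rightarrow> bool" where
  "homotopy_coalgebra V H \<longleftrightarrow>
    \<comment> \<open>C is a functor O_sk^op -> V\<close>
    (\<forall>phi J. osk_map phi J \<longrightarrow> c_arr V (hCm H phi J) \<and> c_dom V (hCm H phi J) = hC H J \<and>
        c_cod V (hCm H phi J) = hC H (length phi)) \<and>
    (\<forall>I. hCm H (osk_id I) I = c_idt V (hC H I)) \<and>
    (\<forall>phi psi J K. osk_map phi J \<and> osk_map psi K \<and> length psi = J \<longrightarrow>
        hCm H (osk_comp phi psi) K = c_cmp V (hCm H psi K) (hCm H phi J)) \<and>
    \<comment> \<open>typing of chi\<close>
    (\<forall>ns. c_arr V (hchi H ns) \<and> c_dom V (hchi H ns) = c_tens V (map (hC H) ns) \<and>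
        c_cod V (hchi H ns) = hC H (sum_list ns)) \<and>
    \<comment> \<open>naturality of chi in the N_i\<close>
    (\<forall>Ns Ms phis. length Ns = length phis \<and> length Ms = length phis \<and>
        (\<forall>i<length phis. osk_map (phis ! i) (Ms ! i) \<and> length (phis ! i) = Ns ! i) \<longrightarrow>
        c_cmp V (c_tensm V (map2 (hCm H) phis Ms)) (hchi H Ns)
        = c_cmp V (hchi H Ms) (hCm H (osk_dunion Ms phis) (sum_list Ms))) \<and>
    \<comment> \<open>chi^1 = id\<close>
    (\<forall>n. hchi H [n] = c_idt V (hC H n)) \<and>
    \<comment> \<open>lax Monoidal functor equation\<close>
    (\<forall>phi J Ns. osk_map phi J \<and> length Ns = length phi \<longrightarrow>
        c_cmp V (c_tensm V (map (\<lambda>j. hchi H (fib phi Ns j)) [1..<Suc J]))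
                (hchi H (map (\<lambda>j. sum_list (fib phi Ns j)) [1..<Suc J]))
        = c_cmp V (c_lam V J phi (map (hC H) Ns)) (hchi H Ns))"

definition ordinary_coalgebra :: "('o, 'm) colax_cat \<Rightarrow> 'o \<Rightarrow> (nat \<Rightarrow> 'm) \<Rightarrow> bool" where
  "ordinary_coalgebra V C0 Delta \<longleftrightarrow>
    (\<forall>I. c_arr V (Delta I) \<and> c_dom V (Delta I) = C0 \<and> c_cod V (Delta I) = c_tens V (replicate I C0)) \<and>
    Delta 1 = c_idt V C0 \<and>
    (\<forall>phi J. osk_map phi J \<longrightarrow>
        Delta (length phi) =
          c_cmp V (c_cmp V (Delta J) (c_tensm V (map (\<lambda>j. Delta (count_list phi j)) [1..<Suc J])))
                  (c_lam V J phi (replicate (length phi) C0)))"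

definition is_assoc_hcoalg ::
    "('o, 'm) colax_cat \<Rightarrow> 'o \<Rightarrow> (nat \<Rightarrow> 'm) \<Rightarrow> ('o, 'm) hcoalg \<Rightarrow> bool" where
  "is_assoc_hcoalg V C0 Delta H \<longleftrightarrow>
    (\<forall>J. hC H J = c_tens V (replicate J C0)) \<and>
    (\<forall>phi J. osk_map phi J \<longrightarrow>
        hCm H phi J = c_cmp V (c_tensm V (map (\<lambda>j. Delta (count_list phi j)) [1..<Suc J]))
                              (c_lam V J phi (replicate (length phi) C0))) \<and>
    (\<forall>ns. hchi H ns = c_lam V (length ns) (block_map ns) (replicate (sum_list ns) C0))"

end

theory Submission
  imports Defs
begin

text \<open>The forward direction is immediate, since C(1) is the tensor power of \<open>C\<^sub>0\<close> of length
  one. Conversely, put \<open>\<Delta>\<^sub>n = C(n \<rightarrow> 1)\<close>. Every \<open>\<phi> : I \<rightarrow> J\<close> is the ordered disjoint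
  union of the terminal maps of its fibres, and it is the block map of its fibre sizes. Hence
  naturality of \<open>\<chi>\<close> with respect to these terminal maps, together with \<open>\<chi> = \<lambda>\<close> at block
  maps (on a family of ones this is \<open>\<lambda>\<close> at the identity, i.e. the identity), expresses
  \<open>C(\<phi>)\<close> as \<open>\<lambda>\<^sup>\<phi>\<close> followed by the tensor product of the \<open>\<Delta>\<close> at the fibre sizes.
  Coassociativity of \<open>\<Delta>\<close> is then functoriality of C applied to \<open>\<phi> ; (J \<rightarrow> 1) = (I \<rightarrow> 1)\<close>.\<close>

lemma count_list_filter:
  "count_list (filter P xs) x = (if P x then count_list xs x else 0)"
  by (induction xs) auto

lemma sorted_eq_replicate_count_append_filter:
  assumes "sorted xs" and "\<forall>x\<in>set xs. a \<le> x"
  shows "xs = replicate (count_list xs a) a @ filter ((<) a) xs"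
  using assms
proof (induction xs)
  case (Cons y ys)
  show ?case
  proof (cases "y = a")
    case False
    with Cons.prems have "\<forall>x\<in>set (y # ys). a < x"
      by force
    then have "count_list (y # ys) a = 0" and "filter ((<) a) (y # ys) = y # ys"
      by (auto simp: count_list_0_iff)
    then show ?thesis
      by simp
  qed (use Cons in auto)
qed simp

lemma sorted_eq_concat_replicate_count:
  "sorted xs \<Longrightarrow> set xs \<subseteq> {a..<b} \<Longrightarrow>
   xs = concat (map (\<lambda>j. replicate (count_list xs j) j) [a..<b])"
proof (induction "b - a" arbitrary: a xs)
  case (Suc n)
  then have "[a..<b] = a # [Suc a..<b]"
    by (simp add: upt_conv_Cons)
  moreover have "xs = replicate (count_list xs a) a @ filter ((<) a) xs"
    using Suc.prems by (intro sorted_eq_replicate_count_append_filter) auto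
  moreover have "filter ((<) a) xs =
      concat (map (\<lambda>j. replicate (count_list (filter ((<) a) xs) j) j) [Suc a..<b])"
    using Suc by (intro Suc.hyps) (auto simp: sorted_wrt_filter)
  moreover have "map (\<lambda>j. replicate (count_list (filter ((<) a) xs) j) j) [Suc a..<b]
      = map (\<lambda>j. replicate (count_list xs j) j) [Suc a..<b]"
    by (simp add: count_list_filter)
  ultimately show ?case
    by simp
qed auto

lemma osk_map_eq_concat_fibres:
  "osk_map phi J \<Longrightarrow> phi = concat (map (\<lambda>j. replicate (count_list phi j) j) [1..<Suc J])"
  unfolding osk_map_def by (intro sorted_eq_concat_replicate_count) auto

lemma osk_map_sum_fibre_sizes:
  "osk_map phi J \<Longrightarrow> sum_list (map (count_list phi) [1..<Suc J]) = length phi"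
proof -
  assume "osk_map phi J"
  then have "set phi \<subseteq> set [1..<Suc J]"
    by (auto simp: osk_map_def)
  then show ?thesis
    by (metis sum_count_set sum_set_upt_conv_sum_list_nat finite_set)
qed

lemma block_map_map:
  "block_map (map f [1..<Suc J]) = concat (map (\<lambda>j. replicate (f j) j) [1..<Suc J])"
proof -
  have "map2 (\<lambda>i n. replicate n i) xs (map f xs) = map (\<lambda>j. replicate (f j) j) xs" for xs :: "nat list"
    by (induction xs) auto
  then show ?thesis
    unfolding block_map_def by (simp del: upt_Suc)
qed

lemma block_map_fibre_sizes:
  "osk_map phi J \<Longrightarrow> block_map (map (count_list phi) [1..<Suc J]) = phi"
  using block_map_map osk_map_eq_concat_fibres by metis

lemma block_map_replicate_one: "block_map (replicate J 1) = osk_id J"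
  using block_map_map[of "\<lambda>_. 1" J] by (simp add: osk_id_def map_replicate_const del: upt_Suc)

lemma osk_map_terminal: "osk_map (replicate n 1) 1"
  unfolding osk_map_def by auto

lemma osk_comp_terminal:
  "osk_map phi J \<Longrightarrow> osk_comp phi (replicate J 1) = replicate (length phi) 1"
  unfolding osk_map_def osk_comp_def by (induction phi) auto

lemma osk_dunion_terminal_fibres:
  assumes "osk_map phi J"
  shows "osk_dunion (replicate J 1) (map (\<lambda>j. replicate (count_list phi j) 1) [1..<Suc J]) = phi"
proof -
  have "map (\<lambda>i. map (\<lambda>v. v + sum_list (take i (replicate J 1)))
           (map (\<lambda>j. replicate (count_list phi j) 1) [1..<Suc J] ! i)) [0..<J]
      = map (\<lambda>i. replicate (count_list phi (Suc i)) (Suc i)) [0..<J]"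
    by (auto simp: min_def sum_list_replicate simp del: upt_Suc)
  also have "\<dots> = map (\<lambda>j. replicate (count_list phi j) j) [1..<Suc J]"
    by (simp add: map_Suc_upt[symmetric] del: upt_Suc)
  finally show ?thesis
    unfolding osk_dunion_def using osk_map_eq_concat_fibres[OF assms] by (simp del: upt_Suc)
qed

lemma fib_replicate:
  "length phi = n \<Longrightarrow> fib phi (replicate n c) j = replicate (count_list phi j) c"
  unfolding fib_def by (induction phi arbitrary: n) auto

lemma category_comp_assoc:
  assumes "category V" and "c_arr V f" "c_arr V g" "c_arr V h"
    and "c_cod V f = c_dom V g" "c_cod V g = c_dom V h"
  shows "c_cmp V (c_cmp V f g) h = c_cmp V f (c_cmp V g h)"
  using assms unfolding category_def by blast

lemma category_id_comp: "category V \<Longrightarrow> c_arr V f \<Longrightarrow> c_cmp V (c_idt V (c_dom V f)) f = f"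
  unfolding category_def by blast

lemma tensor_functors_tensm:
  "tensor_functors V \<Longrightarrow> list_all (c_arr V) fs \<Longrightarrow>
   c_arr V (c_tensm V fs) \<and> c_dom V (c_tensm V fs) = c_tens V (map (c_dom V) fs) \<and>
   c_cod V (c_tensm V fs) = c_tens V (map (c_cod V) fs)"
  unfolding tensor_functors_def by blast

lemma tensor_functors_tens_singleton: "tensor_functors V \<Longrightarrow> c_tens V [x] = x"
  unfolding tensor_functors_def by blast

lemma colax_monoidal_category: "colax_monoidal V \<Longrightarrow> category V"
  unfolding colax_monoidal_def by blast

lemma colax_monoidal_tensor_functors: "colax_monoidal V \<Longrightarrow> tensor_functors V"
  unfolding colax_monoidal_def by blast

lemma colax_monoidal_lam:
  "colax_monoidal V \<Longrightarrow> osk_map phi J \<Longrightarrow> length Xs = length phi \<Longrightarrow>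
   c_arr V (c_lam V J phi Xs) \<and> c_dom V (c_lam V J phi Xs) = lam_src V J phi Xs \<and>
   c_cod V (c_lam V J phi Xs) = c_tens V Xs"
  unfolding colax_monoidal_def by blast

lemma colax_monoidal_lam_id:
  "colax_monoidal V \<Longrightarrow> c_lam V (length Xs) (osk_id (length Xs)) Xs = c_idt V (c_tens V Xs)"
  unfolding colax_monoidal_def by blast

lemma homotopy_coalgebra_hCm:
  "homotopy_coalgebra V H \<Longrightarrow> osk_map phi J \<Longrightarrow>
   c_arr V (hCm H phi J) \<and> c_dom V (hCm H phi J) = hC H J \<and> c_cod V (hCm H phi J) = hC H (length phi)"
  unfolding homotopy_coalgebra_def by blast

lemma homotopy_coalgebra_hCm_id: "homotopy_coalgebra V H \<Longrightarrow> hCm H (osk_id I) I = c_idt V (hC H I)"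
  unfolding homotopy_coalgebra_def by blast

lemma homotopy_coalgebra_hCm_comp:
  "homotopy_coalgebra V H \<Longrightarrow> osk_map phi J \<Longrightarrow> osk_map psi K \<Longrightarrow> length psi = J \<Longrightarrow>
   hCm H (osk_comp phi psi) K = c_cmp V (hCm H psi K) (hCm H phi J)"
  unfolding homotopy_coalgebra_def by blast

lemma homotopy_coalgebra_hchi_natural:
  assumes "homotopy_coalgebra V H"
    and "length Ns = length phis" "length Ms = length phis"
    and "\<And>i. i < length phis \<Longrightarrow> osk_map (phis ! i) (Ms ! i) \<and> length (phis ! i) = Ns ! i"
  shows "c_cmp V (c_tensm V (map2 (hCm H) phis Ms)) (hchi H Ns)
    = c_cmp V (hchi H Ms) (hCm H (osk_dunion Ms phis) (sum_list Ms))"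
  using assms unfolding homotopy_coalgebra_def by blast

definition hcoalg_comult :: "('o, 'm) hcoalg \<Rightarrow> nat \<Rightarrow> 'm" where
  "hcoalg_comult H n = hCm H (replicate n 1) 1"

lemma is_assoc_hcoalg_hC_one:
  "tensor_functors V \<Longrightarrow> is_assoc_hcoalg V C0 Delta H \<Longrightarrow> hC H 1 = C0"
  unfolding is_assoc_hcoalg_def by (simp add: tensor_functors_tens_singleton)

context
  fixes V :: "('o, 'm) colax_cat" and H :: "('o, 'm) hcoalg"
  assumes V: "colax_monoidal V" and H: "homotopy_coalgebra V H"
    and hC_power: "\<And>I. hC H I = c_tens V (replicate I (hC H 1))"
    and hchi_lam: "\<And>ns. hchi H ns = c_lam V (length ns) (block_map ns) (replicate (sum_list ns) (hC H 1))"
begin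

lemma hcoalg_comult_arr:
  "c_arr V (hcoalg_comult H n) \<and> c_dom V (hcoalg_comult H n) = hC H 1 \<and>
   c_cod V (hcoalg_comult H n) = c_tens V (replicate n (hC H 1))"
  using homotopy_coalgebra_hCm[OF H osk_map_terminal, of n] hC_power[of n]
  by (simp add: hcoalg_comult_def)

lemma hCm_eq_comult_lam:
  assumes phi: "osk_map phi J"
  shows "hCm H phi J =
    c_cmp V (c_tensm V (map (\<lambda>j. hcoalg_comult H (count_list phi j)) [1..<Suc J]))
            (c_lam V J phi (replicate (length phi) (hC H 1)))"
proof -
  define Ns where "Ns = map (count_list phi) [1..<Suc J]"
  define phis where "phis = map (\<lambda>n. replicate n (1::nat)) Ns"
  define Ms where "Ms = replicate J (1::nat)"
  have natural: "c_cmp V (c_tensm V (map2 (hCm H) phis Ms)) (hchi H Ns)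
      = c_cmp V (hchi H Ms) (hCm H (osk_dunion Ms phis) (sum_list Ms))"
    by (rule homotopy_coalgebra_hchi_natural[OF H])
      (auto simp: Ns_def phis_def Ms_def osk_map_def simp del: upt_Suc)
  have hchi_Ms: "hchi H Ms = c_idt V (hC H J)"
    using colax_monoidal_lam_id[OF V, of "replicate J (hC H 1)"]
    unfolding hchi_lam Ms_def block_map_replicate_one by (simp add: sum_list_replicate hC_power[of J])
  have dunion: "osk_dunion Ms phis = phi"
    unfolding Ms_def phis_def Ns_def map_map comp_def by (rule osk_dunion_terminal_fibres[OF phi])
  have sum_Ms: "sum_list Ms = J"
    by (simp add: Ms_def sum_list_replicate)
  have comults: "map2 (hCm H) phis Ms = map (\<lambda>j. hcoalg_comult H (count_list phi j)) [1..<Suc J]"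
    by (simp add: Ns_def phis_def Ms_def hcoalg_comult_def zip_replicate2 del: upt_Suc)
  have hchi_Ns: "hchi H Ns = c_lam V J phi (replicate (length phi) (hC H 1))"
    unfolding hchi_lam Ns_def block_map_fibre_sizes[OF phi] osk_map_sum_fibre_sizes[OF phi]
    by (simp del: upt_Suc)
  have "hCm H phi J = c_cmp V (hchi H Ms) (hCm H (osk_dunion Ms phis) (sum_list Ms))"
    unfolding hchi_Ms dunion sum_Ms
    using category_id_comp[OF colax_monoidal_category[OF V]] homotopy_coalgebra_hCm[OF H phi]
    by metis
  also have "\<dots> = c_cmp V (c_tensm V (map2 (hCm H) phis Ms)) (hchi H Ns)"
    by (rule natural[symmetric])
  finally show ?thesis
    unfolding comults hchi_Ns .
qed

lemma is_assoc_hcoalg_comult: "is_assoc_hcoalg V (hC H 1) (hcoalg_comult H) H"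
  unfolding is_assoc_hcoalg_def using hC_power hchi_lam hCm_eq_comult_lam by blast

lemma ordinary_coalgebra_comult: "ordinary_coalgebra V (hC H 1) (hcoalg_comult H)"
  unfolding ordinary_coalgebra_def
proof (intro conjI allI impI)
  show "hcoalg_comult H 1 = c_idt V (hC H 1)"
    using homotopy_coalgebra_hCm_id[OF H, of 1] by (simp add: hcoalg_comult_def osk_id_def)
next
  fix phi J
  assume phi: "osk_map phi J"
  let ?T = "c_tensm V (map (\<lambda>j. hcoalg_comult H (count_list phi j)) [1..<Suc J])"
  let ?L = "c_lam V J phi (replicate (length phi) (hC H 1))"
  have T: "c_arr V ?T \<and> c_dom V ?T = c_tens V (replicate J (hC H 1)) \<and>
      c_cod V ?T = c_tens V (map (\<lambda>j. c_tens V (replicate (count_list phi j) (hC H 1))) [1..<Suc J])"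
    using tensor_functors_tensm[OF colax_monoidal_tensor_functors[OF V]] hcoalg_comult_arr
    by (simp add: list_all_iff comp_def map_replicate_const del: upt_Suc)
  have L: "c_arr V ?L \<and>
      c_dom V ?L = c_tens V (map (\<lambda>j. c_tens V (replicate (count_list phi j) (hC H 1))) [1..<Suc J])"
    using colax_monoidal_lam[OF V phi] by (simp add: lam_src_def fib_replicate del: upt_Suc)
  have "hcoalg_comult H (length phi) = hCm H (osk_comp phi (replicate J 1)) 1"
    unfolding hcoalg_comult_def osk_comp_terminal[OF phi] ..
  also have "\<dots> = c_cmp V (hcoalg_comult H J) (hCm H phi J)"
    unfolding hcoalg_comult_def by (rule homotopy_coalgebra_hCm_comp[OF H phi osk_map_terminal]) simp
  also have "\<dots> = c_cmp V (hcoalg_comult H J) (c_cmp V ?T ?L)"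
    by (simp add: hCm_eq_comult_lam[OF phi])
  also have "\<dots> = c_cmp V (c_cmp V (hcoalg_comult H J) ?T) ?L"
    using category_comp_assoc[OF colax_monoidal_category[OF V]] T L hcoalg_comult_arr by simp
  finally show "hcoalg_comult H (length phi) = c_cmp V (c_cmp V (hcoalg_comult H J) ?T) ?L" .
qed (use hcoalg_comult_arr in auto)

end

theorem mainTheorem2:
  fixes V :: "('o, 'm) colax_cat" and H :: "('o, 'm) hcoalg"
  assumes "colax_monoidal V" and "homotopy_coalgebra V H"
  shows "(\<exists>C0 Delta. ordinary_coalgebra V C0 Delta \<and> is_assoc_hcoalg V C0 Delta H) \<longleftrightarrow>
         ((\<forall>I. hC H I = c_tens V (replicate I (hC H 1))) \<and>
          (\<forall>ns. hchi H ns = c_lam V (length ns) (block_map ns) (replicate (sum_list ns) (hC H 1))))"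
proof
  assume "\<exists>C0 Delta. ordinary_coalgebra V C0 Delta \<and> is_assoc_hcoalg V C0 Delta H"
  then obtain C0 Delta where assoc: "is_assoc_hcoalg V C0 Delta H"
    by blast
  moreover have "hC H 1 = C0"
    using is_assoc_hcoalg_hC_one[OF colax_monoidal_tensor_functors[OF assms(1)] assoc] .
  ultimately show "(\<forall>I. hC H I = c_tens V (replicate I (hC H 1))) \<and>
      (\<forall>ns. hchi H ns = c_lam V (length ns) (block_map ns) (replicate (sum_list ns) (hC H 1)))"
    by (simp add: is_assoc_hcoalg_def)
next
  assume "(\<forall>I. hC H I = c_tens V (replicate I (hC H 1))) \<and>
      (\<forall>ns. hchi H ns = c_lam V (length ns) (block_map ns) (replicate (sum_list ns) (hC H 1)))"
  then show "\<exists>C0 Delta. ordinary_coalgebra V C0 Delta \<and> is_assoc_hcoalg V C0 Delta H"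
    using ordinary_coalgebra_comult[OF assms] is_assoc_hcoalg_comult[OF assms] by blast
qed

end
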